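(* Let $l,m,p,q\in\mathbb{N}$, $f\in\mathrm{Hom}_\Omega([l],[p])$, $g\in\mathrm{Hom}_\Omega([m],[q])$ and let $H\in G[l]$, $K\in G[m]$. Then, for $\varrho\in C(H)$, $\varsigma\in C(K)$, $(f\smile g)_{H\smile K*}(\varrho\smile\varsigma)=f_{H*}(\varrho)\smile g_{K*}(\varsigma)$.
   Context: $\Omega$ is the category of finite ordinals $[l]=\{0,\dots,l-1\}$ and all functions; for $f:[l]\to[p]$, $g:[m]\to[q]$, $f\smile g:[l+m]\to[p+q]$ is $f\smile g(i)=f(i)$ for $i\in[l]$ and $g(i-l)+p$ for $i\in[m]+l$. $G[l]$ is the set of hypergraphs on $[l]$ (sets of non empty subsets of $[l]$), $Gf(H)=\{f(X)\mid X\in H\}$, and $H\smile K=H\cup(K+l)$ with $K+l=\{X+l\mid X\in K\}$. Fix finite additive commutative monoids $\mathsf{A}$, $\mathsf{M}$. For finite $X\subset\mathbb{N}$, $\mathsf{A}^X$ is the monoid of functions $X\to\mathsf{A}$; for $f:X\to Y$, $f_\star(w)(s)=\sum_{r\in X,f(r)=s}w(r)$; for $\varpi:\mathsf{A}^X\to\mathsf{M}$, $f_*(\varpi)(v)=\sum_{w\in\mathsf{A}^X,f_\star(w)=v}\varpi(w)$. A calibration $\varrho\in C(H)$ assigns to each $X\in H$ a function $\varrho_X:\mathsf{A}^X\to\mathsf{M}$. For $f\in\mathrm{Hom}_\Omega([l],[m])$, $f_{H*}:C(H)\to C(Gf(H))$ is $f_{H*}(\varrho)_Y=\sum_{X\in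 H,f(X)=Y}f|_{X*}(\varrho_X)$. With $t_{Xl}(r)=r-l$ on $X\subset\mathbb{N}+l$, the calibration monadic product is $(\varrho\smile\varsigma)_X=\varrho_X$ for $X\in H$ and $\varsigma_{X-l}\circ t_{Xl\star}$ for $X\in K+l$. *)

theory Defs
  imports Main
begin

definition ordinal :: "nat \<Rightarrow> nat set" where "ordinal l = {..<l}"

text \<open>Morphisms of Omega: functions [l] -> [p] (values outside [l] irrelevant).\<close>
definition omega_hom :: "nat \<Rightarrow> nat \<Rightarrow> (nat \<Rightarrow> nat) \<Rightarrow> bool" where
  "omega_hom l p f \<longleftrightarrow> f ` ordinal l \<subseteq> ordinal p"

definition omega_smile :: "nat \<Rightarrow> nat \<Rightarrow> (nat \<Rightarrow> nat) \<Rightarrow> (nat \<Rightarrow> nat) \<Rightarrow> nat \<Rightarrow> nat" where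
  "omega_smile l p f g = (\<lambda>i. if i < l then f i else g (i - l) + p)"

definition hypergraph :: "nat \<Rightarrow> nat set set \<Rightarrow> bool" where
  "hypergraph l H \<longleftrightarrow> (\<forall>X\<in>H. X \<noteq> {} \<and> X \<subseteq> ordinal l)"

definition Gmap :: "(nat \<Rightarrow> nat) \<Rightarrow> nat set set \<Rightarrow> nat set set" where
  "Gmap f H = (\<lambda>X. f ` X) ` H"

definition shift_set :: "nat set \<Rightarrow> nat \<Rightarrow> nat set" where
  "shift_set X l = (\<lambda>r. r + l) ` X"

definition hg_smile :: "nat \<Rightarrow> nat set set \<Rightarrow> nat set set \<Rightarrow> nat set set" where
  "hg_smile l H K = H \<union> (\<lambda>X. shift_set X l) ` K"

text \<open>A^X: functions X -> A, represented as functions nat -> A vanishing outside X.\<close>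
definition cube :: "nat set \<Rightarrow> (nat \<Rightarrow> 'a::{comm_monoid_add,finite}) set" where
  "cube X = {w. \<forall>r. r \<notin> X \<longrightarrow> w r = 0}"

definition push_star :: "nat set \<Rightarrow> (nat \<Rightarrow> nat) \<Rightarrow> (nat \<Rightarrow> 'a::{comm_monoid_add,finite}) \<Rightarrow> nat \<Rightarrow> 'a" where
  "push_star X f w = (\<lambda>s. \<Sum>r\<in>{r\<in>X. f r = s}. w r)"

definition push_fun :: "nat set \<Rightarrow> (nat \<Rightarrow> nat) \<Rightarrow> ((nat \<Rightarrow> 'a::{comm_monoid_add,finite}) \<Rightarrow> 'm::{comm_monoid_add,finite})
    \<Rightarrow> (nat \<Rightarrow> 'a) \<Rightarrow> 'm" where
  "push_fun X f \<omega> = (\<lambda>v. \<Sum>w\<in>{w\<in>cube X. push_star X f w = v}. \<omega> w)"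

text \<open>Calibrations: assign to each hyperedge X a function A^X -> M
  (only the values at X in H and w in A^X are meaningful).\<close>
type_synonym ('a,'m) calib = "nat set \<Rightarrow> (nat \<Rightarrow> 'a) \<Rightarrow> 'm"

definition calib_push :: "(nat \<Rightarrow> nat) \<Rightarrow> nat set set \<Rightarrow> ('a::{comm_monoid_add,finite},'m::{comm_monoid_add,finite}) calib
    \<Rightarrow> ('a,'m) calib" where
  "calib_push f H \<rho> = (\<lambda>Y. \<lambda>v. \<Sum>X\<in>{X\<in>H. f ` X = Y}. push_fun X f (\<rho> X) v)"

definition calib_smile :: "nat \<Rightarrow> nat set set \<Rightarrow> ('a::{comm_monoid_add,finite},'m::{comm_monoid_add,finite}) calib
    \<Rightarrow> ('a,'m) calib \<Rightarrow> ('a,'m) calib" where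
  "calib_smile l H \<rho> \<sigma> = (\<lambda>X. if X \<in> H then \<rho> X
      else (\<lambda>w. \<sigma> ((\<lambda>r. r - l) ` X) (push_star X (\<lambda>r. r - l) w)))"

definition calib_eq :: "nat set set \<Rightarrow> ('a::{comm_monoid_add,finite},'m::{comm_monoid_add,finite}) calib
    \<Rightarrow> ('a,'m) calib \<Rightarrow> bool" where
  "calib_eq H \<rho> \<sigma> \<longleftrightarrow> (\<forall>X\<in>H. \<forall>w\<in>cube X. \<rho> X w = \<sigma> X w)"

end

theory Submission
  imports Defs
begin

text \<open>Every edge of \<open>H \<smile> K\<close> lies in \<open>[l]\<close> or in \<open>\<nat> + l\<close>, and \<open>f \<smile> g\<close> maps these
  two blocks into \<open>[p]\<close> and \<open>\<nat> + p\<close>. As edges are nonempty, the fibre of \<open>f \<smile> g\<close> over an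
  edge of \<open>Gf(H) \<smile> Gg(K)\<close> consists either only of edges of \<open>H\<close>, on which \<open>f \<smile> g\<close> agrees
  with \<open>f\<close>, or only of translates \<open>X + l\<close> of edges of \<open>K\<close>. In the second case the translation
  \<open>u \<mapsto> u(- + l)\<close> is a bijection \<open>A^(X + l) \<rightarrow> A^X\<close> that turns the push-forward along
  \<open>f \<smile> g\<close> into the push-forward along \<open>g\<close>, read off at \<open>w(- + p)\<close>.\<close>

lemma shift_set_not_below:
  assumes "A \<subseteq> {..<k}" and "A \<noteq> {}"
  shows "shift_set B k \<noteq> A"
  using assms by (auto simp: shift_set_def)

lemma shift_set_not_edge:
  assumes "hypergraph k H"
  shows "shift_set B k \<notin> H"
proof
  assume "shift_set B k \<in> H"
  with assms have "shift_set B k \<subseteq> {..<k}" and "shift_set B k \<noteq> {}"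
    by (auto simp: hypergraph_def ordinal_def)
  then show False
    using shift_set_not_below[of "shift_set B k"] by blast
qed

lemma image_minus_shift_set: "(\<lambda>r. r - l) ` shift_set X l = X"
  by (force simp: shift_set_def image_image)

lemma inj_shift_set: "inj (\<lambda>X. shift_set X l)"
  by (metis image_minus_shift_set injI)

lemma omega_smile_image_low:
  assumes "X \<subseteq> {..<l}"
  shows "omega_smile l p f g ` X = f ` X"
  using assms by (auto simp: omega_smile_def intro!: image_cong)

lemma omega_smile_image_edge:
  assumes "hypergraph l H" and "X \<in> H"
  shows "omega_smile l p f g ` X = f ` X"
  using assms by (intro omega_smile_image_low) (auto simp: hypergraph_def ordinal_def)

lemma omega_smile_shift: "omega_smile l p f g (r + l) = g r + p"
  by (simp add: omega_smile_def)

lemma omega_smile_image_shift: "omega_smile l p f g ` shift_set X l = shift_set (g ` X) p"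
  by (auto simp: shift_set_def omega_smile_shift image_image)

lemma hypergraph_Gmap:
  assumes "omega_hom l p f" and "hypergraph l H"
  shows "hypergraph p (Gmap f H)"
  using assms by (fastforce simp: hypergraph_def omega_hom_def Gmap_def)

lemma Gmap_omega_smile_hg_smile:
  assumes "hypergraph l H"
  shows "Gmap (omega_smile l p f g) (hg_smile l H K) = hg_smile p (Gmap f H) (Gmap g K)"
proof -
  have "Gmap (omega_smile l p f g) H = Gmap f H"
    unfolding Gmap_def using omega_smile_image_edge[OF assms] by (rule image_cong[OF refl])
  moreover have "Gmap (omega_smile l p f g) ((\<lambda>X. shift_set X l) ` K) = (\<lambda>Z. shift_set Z p) ` Gmap g K"
    unfolding Gmap_def image_comp by (simp add: comp_def omega_smile_image_shift)
  ultimately show ?thesis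
    unfolding hg_smile_def Gmap_def image_Un by simp
qed

lemma push_star_shift_down:
  assumes "Z \<subseteq> {k..}" and "w \<in> cube Z"
  shows "push_star Z (\<lambda>r. r - k) w = (\<lambda>s. w (s + k))"
proof
  fix s
  have "{r \<in> Z. r - k = s} = (if s + k \<in> Z then {s + k} else {})"
    using assms(1) by auto
  then show "push_star Z (\<lambda>r. r - k) w s = w (s + k)"
    using assms(2) by (auto simp: push_star_def cube_def)
qed

lemma push_star_shift_set:
  assumes "\<And>r. r \<in> X \<Longrightarrow> F (r + l) = g r + p"
  shows "push_star (shift_set X l) F u
    = (\<lambda>s. if p \<le> s then push_star X g (\<lambda>r. u (r + l)) (s - p) else 0)"
proof
  fix s
  have "{r \<in> shift_set X l. F r = s} = (\<lambda>r. r + l) ` {r \<in> X. g r + p = s}"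
    using assms by (force simp: shift_set_def)
  then have "push_star (shift_set X l) F u s = (\<Sum>r \<in> {r \<in> X. g r + p = s}. u (r + l))"
    by (simp add: push_star_def sum.reindex)
  also have "\<dots> = (if p \<le> s then push_star X g (\<lambda>r. u (r + l)) (s - p) else 0)"
    unfolding push_star_def by (cases "p \<le> s") (auto intro!: sum.cong)
  finally show "push_star (shift_set X l) F u s = \<dots>" .
qed

lemma calib_smile_shift:
  assumes "shift_set X l \<notin> H" and "w \<in> cube (shift_set X l)"
  shows "calib_smile l H \<rho> \<sigma> (shift_set X l) w = \<sigma> X (\<lambda>r. w (r + l))"
proof -
  have "shift_set X l \<subseteq> {l..}"
    by (auto simp: shift_set_def)
  with assms show ?thesis
    by (simp add: calib_smile_def image_minus_shift_set push_star_shift_down)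
qed

lemma sum_cube_shift_set:
  "(\<Sum>u \<in> {u \<in> cube (shift_set X l). P (\<lambda>r. u (r + l))}. \<phi> (\<lambda>r. u (r + l)))
     = (\<Sum>v \<in> {v \<in> cube X. P v}. \<phi> v)"
proof (rule sum.reindex_bij_witness[where j = "\<lambda>u r. u (r + l)"
      and i = "\<lambda>v r. if l \<le> r then v (r - l) else 0"])
  fix u assume "u \<in> {u \<in> cube (shift_set X l). P (\<lambda>r. u (r + l))}"
  then have u: "\<And>r. r \<notin> shift_set X l \<Longrightarrow> u r = 0"
    by (simp add: cube_def)
  have "r < l \<Longrightarrow> r \<notin> shift_set X l" for r
    by (auto simp: shift_set_def)
  with u show "(\<lambda>r. if l \<le> r then u (r - l + l) else 0) = u"
    by (auto simp: fun_eq_iff)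
  have "r \<notin> X \<Longrightarrow> r + l \<notin> shift_set X l" for r
    by (auto simp: shift_set_def)
  with u show "(\<lambda>r. u (r + l)) \<in> {v \<in> cube X. P v}"
    using \<open>u \<in> _\<close> by (simp add: cube_def)
next
  fix v assume v: "v \<in> {v \<in> cube X. P v}"
  show "(\<lambda>r. if l \<le> r + l then v (r + l - l) else 0) = v"
    by simp
  have "l \<le> r \<Longrightarrow> r \<notin> shift_set X l \<Longrightarrow> r - l \<notin> X" for r
    by (auto simp: shift_set_def image_iff)
  with v show "(\<lambda>r. if l \<le> r then v (r - l) else 0) \<in> {u \<in> cube (shift_set X l). P (\<lambda>r. u (r + l))}"
    by (auto simp: cube_def)
qed simp

lemma push_fun_cong:
  fixes \<phi> \<psi> :: "(nat \<Rightarrow> 'a::{comm_monoid_add,finite}) \<Rightarrow> 'm::{comm_monoid_add,finite}"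
  assumes "\<And>r. r \<in> X \<Longrightarrow> F r = f r" and "\<And>u. u \<in> cube X \<Longrightarrow> \<phi> u = \<psi> u"
  shows "push_fun X F \<phi> = push_fun X f \<psi>"
proof -
  have "push_star X F = (push_star X f :: (nat \<Rightarrow> 'a) \<Rightarrow> _)"
    unfolding push_star_def using assms(1) by (intro ext sum.cong) auto
  with assms(2) show ?thesis
    unfolding push_fun_def by (intro ext sum.cong) simp_all
qed

lemma push_fun_shift_set:
  fixes \<phi> :: "(nat \<Rightarrow> 'a::{comm_monoid_add,finite}) \<Rightarrow> 'm::{comm_monoid_add,finite}"
  assumes "\<And>r. r \<in> X \<Longrightarrow> F (r + l) = g r + p" and "\<And>s. s < p \<Longrightarrow> w s = 0"
  shows "push_fun (shift_set X l) F (\<lambda>u. \<phi> (\<lambda>r. u (r + l))) w = push_fun X g \<phi> (\<lambda>t. w (t + p))"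
proof -
  have fibre: "push_star (shift_set X l) F u = w \<longleftrightarrow> push_star X g (\<lambda>r. u (r + l)) = (\<lambda>t. w (t + p))"
    for u :: "nat \<Rightarrow> 'a"
  proof -
    have "(\<forall>s. (if p \<le> s then h (s - p) else 0) = w s) \<longleftrightarrow> (\<forall>t. h t = w (t + p))"
      for h :: "nat \<Rightarrow> 'a"
    proof (intro iffI allI)
      fix t
      assume "\<forall>s. (if p \<le> s then h (s - p) else 0) = w s"
      from this[rule_format, of "t + p"] show "h t = w (t + p)"
        by simp
    next
      fix s
      assume "\<forall>t. h t = w (t + p)"
      with assms(2) show "(if p \<le> s then h (s - p) else 0) = w s"
        by simp
    qed
    then show ?thesis
      by (simp only: push_star_shift_set[of X F l g p, OF assms(1)] fun_eq_iff)
  qed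
  show ?thesis
    unfolding push_fun_def fibre by (rule sum_cube_shift_set)
qed

lemma omega_smile_fibre_low:
  assumes "omega_hom l p f" and "hypergraph l H" and "Y \<in> Gmap f H"
  shows "{X \<in> hg_smile l H K. omega_smile l p f g ` X = Y} = {X \<in> H. f ` X = Y}"
proof -
  have "omega_smile l p f g ` shift_set X l \<noteq> Y" for X
    unfolding omega_smile_image_shift
    using shift_set_not_edge[OF hypergraph_Gmap[OF assms(1,2)]] assms(3) by blast
  then have "X \<in> hg_smile l H K \<and> omega_smile l p f g ` X = Y \<longleftrightarrow> X \<in> H \<and> f ` X = Y" for X
    using omega_smile_image_edge[OF assms(2)] by (cases "X \<in> H") (auto simp: hg_smile_def)
  then show ?thesis
    by (intro set_eqI) (simp only: mem_Collect_eq)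
qed

lemma omega_smile_fibre_shift:
  assumes "omega_hom l p f" and "hypergraph l H"
  shows "{X \<in> hg_smile l H K. omega_smile l p f g ` X = shift_set Z p}
    = (\<lambda>X. shift_set X l) ` {X \<in> K. g ` X = Z}" (is "?fibre = ?shifted")
proof (intro set_eqI iffI)
  have image_eq: "omega_smile l p f g ` shift_set X l = shift_set Z p \<longleftrightarrow> g ` X = Z" for X
    by (simp add: omega_smile_image_shift inj_eq[OF inj_shift_set])
  have not_low: "omega_smile l p f g ` X \<noteq> shift_set Z p" if "X \<in> H" for X
    using omega_smile_image_edge[OF assms(2) that] that
      shift_set_not_edge[OF hypergraph_Gmap[OF assms(1,2)]]
    by (metis Gmap_def image_eqI)
  fix X
  assume "X \<in> ?fibre"
  with not_low obtain X' where "X' \<in> K" and X: "X = shift_set X' l"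
    and "omega_smile l p f g ` shift_set X' l = shift_set Z p"
    by (auto simp: hg_smile_def)
  with image_eq have "X' \<in> {X \<in> K. g ` X = Z}"
    by simp
  with X show "X \<in> ?shifted"
    by (rule image_eqI)
next
  fix X
  assume "X \<in> ?shifted"
  then obtain X' where "X' \<in> K" and "g ` X' = Z" and "X = shift_set X' l"
    by auto
  then show "X \<in> ?fibre"
    by (simp add: hg_smile_def omega_smile_image_shift)
qed

lemma calib_push_smile_low:
  assumes "omega_hom l p f" and "hypergraph l H" and "Y \<in> Gmap f H"
  shows "calib_push (omega_smile l p f g) (hg_smile l H K) (calib_smile l H \<rho> \<sigma>) Y
    = calib_push f H \<rho> Y"
proof -
  have "push_fun X (omega_smile l p f g) (calib_smile l H \<rho> \<sigma> X) = push_fun X f (\<rho> X)"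
    if "X \<in> H" for X
  proof (rule push_fun_cong)
    show "omega_smile l p f g r = f r" if "r \<in> X" for r
      using assms(2) \<open>X \<in> H\<close> that by (auto simp: hypergraph_def ordinal_def omega_smile_def)
  qed (simp add: calib_smile_def \<open>X \<in> H\<close>)
  then show ?thesis
    unfolding calib_push_def omega_smile_fibre_low[OF assms] by (intro ext sum.cong) simp_all
qed

lemma calib_push_smile_high:
  assumes "omega_hom l p f" and "hypergraph l H" and "w \<in> cube (shift_set Z p)"
  shows "calib_push (omega_smile l p f g) (hg_smile l H K) (calib_smile l H \<rho> \<sigma>) (shift_set Z p) w
    = calib_push g K \<sigma> Z (\<lambda>t. w (t + p))"
proof -
  have w_low: "w s = 0" if "s < p" for s
  proof -
    from that have "s \<notin> shift_set Z p"
      by (auto simp: shift_set_def)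
    with assms(3) show ?thesis
      by (simp add: cube_def)
  qed
  have "push_fun (shift_set X l) (omega_smile l p f g) (calib_smile l H \<rho> \<sigma> (shift_set X l)) w
      = push_fun X g (\<sigma> X) (\<lambda>t. w (t + p))" for X
  proof -
    have "push_fun (shift_set X l) (omega_smile l p f g) (calib_smile l H \<rho> \<sigma> (shift_set X l))
        = push_fun (shift_set X l) (omega_smile l p f g) (\<lambda>u. \<sigma> X (\<lambda>r. u (r + l)))"
      using shift_set_not_edge[OF assms(2)] by (intro push_fun_cong calib_smile_shift) auto
    then show ?thesis
      by (simp add: push_fun_shift_set omega_smile_shift w_low)
  qed
  moreover have "inj_on (\<lambda>X. shift_set X l) A" for A
    using inj_shift_set by (rule inj_on_subset) simp
  ultimately show ?thesis
    unfolding calib_push_def omega_smile_fibre_shift[OF assms(1,2)] by (simp add: sum.reindex)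
qed

theorem proposition3p24:
  fixes l m p q :: nat and f g :: "nat \<Rightarrow> nat" and H K :: "nat set set"
    and \<rho> \<sigma> :: "('a::{comm_monoid_add,finite},'m::{comm_monoid_add,finite}) calib"
  assumes "omega_hom l p f" and "omega_hom m q g"
    and "hypergraph l H" and "hypergraph m K"
  shows "calib_eq (Gmap (omega_smile l p f g) (hg_smile l H K))
           (calib_push (omega_smile l p f g) (hg_smile l H K) (calib_smile l H \<rho> \<sigma>))
           (calib_smile p (Gmap f H) (calib_push f H \<rho>) (calib_push g K \<sigma>))"
proof -
  have "calib_push (omega_smile l p f g) (hg_smile l H K) (calib_smile l H \<rho> \<sigma>) Y w
      = calib_smile p (Gmap f H) (calib_push f H \<rho>) (calib_push g K \<sigma>) Y w"
    if Y: "Y \<in> hg_smile p (Gmap f H) (Gmap g K)" and w: "w \<in> cube Y" for Y w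
  proof -
    from Y consider "Y \<in> Gmap f H" | Z where "Y = shift_set Z p"
      by (auto simp: hg_smile_def)
    then show ?thesis
    proof cases
      case 1
      then show ?thesis
        unfolding calib_push_smile_low[OF assms(1,3) 1] by (simp add: calib_smile_def)
    next
      case 2
      have "shift_set Z p \<notin> Gmap f H"
        by (rule shift_set_not_edge[OF hypergraph_Gmap[OF assms(1,3)]])
      with 2 w show ?thesis
        by (simp add: calib_push_smile_high[OF assms(1,3)] calib_smile_shift)
    qed
  qed
  then show ?thesis
    unfolding calib_eq_def Gmap_omega_smile_hg_smile[OF assms(3)] by blast
qed

end
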